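(* Let $A\in\mathsf{M}_n(\mathbb{C})$ and let $P=\{V_1,\dots,V_h\}$ be a partition of $\{1,\dots,n\}$. Let $\omega=\exp(2\pi \mathrm{i}/h)$ and $\alpha_{ij}=(i-j)\bmod h$ for integers $i,j$. Suppose that both of the following hold: (i) for every eigenvalue $\lambda$ of $A$ and every right Jordan chain $\{x_{\langle 0,j\rangle}\}_{j=1}^p$ of $A$ corresponding to $\lambda$, writing $x_{ij}$ for the subvector of $x_{\langle 0,j\rangle}$ indexed by $V_i$ ($i\in\{1,\dots,h\}$), and letting $x_{\langle k,j\rangle}\in\mathbb{C}^n$ be the vector whose subvector indexed by $V_i$ is $(\omega^k)^{\alpha_{ij}}x_{ij}$ for each $i$, the set $\{x_{\langle k,j\rangle}\}_{j=1}^p$ is a right Jordan chain of $A$ corresponding to $\lambda\omega^k$, for every $k\in\{0,1,\dots,h-1\}$; (ii) for every eigenvalue $\lambda$ of $A$ and every left Jordan chain $\{y_{\langle j,0\rangle}\}_{j=1}^p$ of $A$ corresponding to $\lambda$, writing $y_{ji}$ for the subvector of $y_{\langle j,0\rangle}$ indexed by $V_i$, and letting $y_{\langle j,k\rangle}\in\mathbb{C}^n$ be the vector whose subvector indexed by $V_i$ is $(\omega^k)^{\alpha_{ji}}y_{ji}$ for each $i$, the set $\{y_{\langle j,k\rangle}\}_{j=1}^p$ is a left Jordan chain of $A$ corresponding to $\lambda\omega^k$, for every $k\in\{0,1,\dots,h-1\}$. Then $A$ is $h$-cyclic with partition $P$.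
   Context: A right Jordan chain of $A$ corresponding to $\lambda$ is a list $x_1,\dots,x_p\in\mathbb{C}^n$ with $x_1\neq 0$, $Ax_1=\lambda x_1$ and $Ax_j=\lambda x_j+x_{j-1}$ for $1<j\le p$. A left Jordan chain of $A$ corresponding to $\lambda$ is a list $y_1,\dots,y_p\in\mathbb{C}^n$ (nonzero) with $y_p^\top A=\lambda y_p^\top$ and $y_j^\top A=\lambda y_j^\top+y_{j+1}^\top$ for $1\le j<p$ (so that these are the rows of $S^{-1}$ corresponding to a Jordan block when $S^{-1}AS$ is in Jordan form). Subvectors indexed by $V_i$ list the entries with indices in $V_i$ in increasing order. The digraph $\Gamma_A$ of $A=[a_{ij}]$ has vertex set $\{1,\dots,n\}$ and arcs $(i,j)$ with $a_{ij}\ne 0$; $A$ is $h$-cyclic with partition $P$ if for every arc $(i,j)$ there is $\ell\in\{1,\dots,h\}$ with $i\in V_\ell$, $j\in V_{\ell+1}$, where $V_{h+1}:=V_1$. *)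

theory Defs
  imports Complex_Main "Jordan_Normal_Form.Char_Poly"
begin

text \<open>Indices of vectors/matrices are 0-based: the ground set is {0..<n}.
  Blocks of the partition are V 1, ..., V h. Jordan chains are functions on {1..p}.\<close>

definition is_partition :: "nat \<Rightarrow> nat \<Rightarrow> (nat \<Rightarrow> nat set) \<Rightarrow> bool" where
  "is_partition n h V \<longleftrightarrow> h \<ge> 1 \<and> (\<forall>i\<in>{1..h}. V i \<noteq> {}) \<and>
     (\<forall>i\<in>{1..h}. \<forall>j\<in>{1..h}. i \<noteq> j \<longrightarrow> V i \<inter> V j = {}) \<and>
     (\<Union>i\<in>{1..h}. V i) = {0..<n}"

definition right_jordan_chain :: "complex mat \<Rightarrow> complex \<Rightarrow> (nat \<Rightarrow> complex vec) \<Rightarrow> nat \<Rightarrow> bool" where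
  "right_jordan_chain A lam x p \<longleftrightarrow> p \<ge> 1 \<and>
     (\<forall>j\<in>{1..p}. x j \<in> carrier_vec (dim_row A)) \<and>
     x 1 \<noteq> 0\<^sub>v (dim_row A) \<and>
     A *\<^sub>v x 1 = lam \<cdot>\<^sub>v x 1 \<and>
     (\<forall>j\<in>{2..p}. A *\<^sub>v x j = lam \<cdot>\<^sub>v x j + x (j - 1))"

text \<open>Left Jordan chain y 1, ..., y p of A for lambda; the row-vector identity
  y^T A = c y^T + z^T is written as A^T y = c y + z.\<close>
definition left_jordan_chain :: "complex mat \<Rightarrow> complex \<Rightarrow> (nat \<Rightarrow> complex vec) \<Rightarrow> nat \<Rightarrow> bool" where
  "left_jordan_chain A lam y p \<longleftrightarrow> p \<ge> 1 \<and>
     (\<forall>j\<in>{1..p}. y j \<in> carrier_vec (dim_row A) \<and> y j \<noteq> 0\<^sub>v (dim_row A)) \<and>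
     transpose_mat A *\<^sub>v y p = lam \<cdot>\<^sub>v y p \<and>
     (\<forall>j\<in>{1..<p}. transpose_mat A *\<^sub>v y j = lam \<cdot>\<^sub>v y j + y (j + 1))"

definition block_of :: "nat \<Rightarrow> (nat \<Rightarrow> nat set) \<Rightarrow> nat \<Rightarrow> nat" where
  "block_of h V m = (THE i. i \<in> {1..h} \<and> m \<in> V i)"

definition omega :: "nat \<Rightarrow> complex" where
  "omega h = exp (2 * complex_of_real pi * \<i> / of_nat h)"

definition alpha :: "nat \<Rightarrow> int \<Rightarrow> int \<Rightarrow> nat" where
  "alpha h i j = nat ((i - j) mod int h)"

definition right_shift :: "nat \<Rightarrow> nat \<Rightarrow> (nat \<Rightarrow> nat set) \<Rightarrow> nat \<Rightarrow> (nat \<Rightarrow> complex vec) \<Rightarrow> nat \<Rightarrow> complex vec" where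
  "right_shift n h V k x j = vec n (\<lambda>m. (omega h ^ k) ^ alpha h (int (block_of h V m)) (int j) * x j $ m)"

definition left_shift :: "nat \<Rightarrow> nat \<Rightarrow> (nat \<Rightarrow> nat set) \<Rightarrow> nat \<Rightarrow> (nat \<Rightarrow> complex vec) \<Rightarrow> nat \<Rightarrow> complex vec" where
  "left_shift n h V k y j = vec n (\<lambda>m. (omega h ^ k) ^ alpha h (int j) (int (block_of h V m)) * y j $ m)"

definition h_cyclic :: "complex mat \<Rightarrow> nat \<Rightarrow> (nat \<Rightarrow> nat set) \<Rightarrow> bool" where
  "h_cyclic A h V \<longleftrightarrow> (\<forall>i<dim_row A. \<forall>j<dim_col A. A $$ (i, j) \<noteq> 0 \<longrightarrow>
     (\<exists>l\<in>{1..h}. i \<in> V l \<and> j \<in> V (if l = h then 1 else l + 1)))"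

end

theory Submission
  imports Defs "Jordan_Normal_Form.Jordan_Normal_Form_Existence"
begin

text \<open>Let \<open>b m\<close> be the index of the block containing \<open>m\<close> and
  \<open>D = diag(\<omega>^b m)\<close> (\<open>block_phase\<close>). Comparing entries, \<open>A D = \<omega> D A\<close> says
  \<open>a_ij \<omega>^b(j) = \<omega>^(b(i)+1) a_ij\<close>, i.e. every arc of \<open>\<Gamma>_A\<close> leads from a block to the
  next one; so it suffices to show \<open>A D = \<omega> D A\<close>. For \<open>k = 1\<close> the shift of a right
  Jordan chain \<open>x_1, ..., x_p\<close> is \<open>z_j = \<omega>^(-j) D x_j\<close>, and its chain equation
  \<open>A z_p = \<lambda>\<omega> z_p + z_(p-1)\<close>, multiplied by \<open>\<omega>^p\<close>, becomes \<open>A D x_p = \<omega> D A x_p\<close>.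
  Every column of a Jordan basis of \<open>A\<close> is the last vector of a right Jordan chain, so
  \<open>A D\<close> and \<open>\<omega> D A\<close> agree on a basis. Only hypothesis (i) with \<open>k = 1\<close> is needed.\<close>

lemma omega_nonzero: "omega h \<noteq> 0"
  unfolding omega_def by simp

lemma omega_power: "omega h ^ k = cis (2 * pi * real k / real h)"
  unfolding omega_def cis_conv_exp DeMoivre[symmetric] exp_of_nat_mult[symmetric]
  by (simp add: field_simps)

lemma omega_power_mod:
  assumes "h \<ge> 1" shows "omega h ^ (k mod h) = omega h ^ k"
proof -
  have "omega h ^ h = 1"
    using assms by (simp add: omega_power)
  hence "omega h ^ (h * (k div h) + k mod h) = omega h ^ (k mod h)"
    unfolding power_add power_mult by simp
  thus ?thesis by simp
qed

lemma dvd_if_omega_power_eq_1: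
  assumes "h \<ge> 1" and "omega h ^ k = 1" shows "h dvd k"
proof -
  have "cos (2 * pi * real k / real h) = 1"
    using assms(2) unfolding omega_power by (metis cis.sel(1) one_complex.sel(1))
  then obtain z :: int where "2 * pi * real k / real h = of_int z * 2 * pi"
    using cos_one_2pi_int by (metis mult.commute times_divide_eq_left)
  hence "int k = z * int h"
    using assms(1) by (simp add: field_simps) (metis of_int_eq_iff of_int_mult of_int_of_nat_eq)
  thus ?thesis by (metis dvd_triv_right int_dvd_int_iff)
qed

lemma omega_power_eq_iff:
  assumes "h \<ge> 1" shows "omega h ^ a = omega h ^ b \<longleftrightarrow> a mod h = b mod h"
proof
  have mod_eq: "a mod h = b mod h" if "b \<le> a" "omega h ^ a = omega h ^ b" for a b
  proof -
    have "omega h ^ b * omega h ^ (a - b) = omega h ^ b * 1"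
      using that by (simp flip: power_add)
    hence "h dvd a - b"
      using assms omega_nonzero dvd_if_omega_power_eq_1 by (metis mult_left_cancel power_not_zero)
    thus ?thesis using \<open>b \<le> a\<close> by (simp add: mod_eq_dvd_iff_nat)
  qed
  show "omega h ^ a = omega h ^ b \<Longrightarrow> a mod h = b mod h"
    using mod_eq[of a b] mod_eq[of b a] by (cases "b \<le> a") auto
  show "a mod h = b mod h \<Longrightarrow> omega h ^ a = omega h ^ b"
    by (metis assms omega_power_mod)
qed

lemma omega_power_alpha:
  assumes "h \<ge> 1" shows "omega h ^ alpha h (int i) (int j) * omega h ^ j = omega h ^ i"
proof -
  have "int ((alpha h (int i) (int j) + j) mod h) = ((int i - int j) mod int h + int j) mod int h"
    using assms by (simp add: alpha_def zmod_int)
  also have "\<dots> = int (i mod h)"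
    by (simp add: mod_add_left_eq zmod_int)
  finally have "(alpha h (int i) (int j) + j) mod h = i mod h"
    by (simp only: of_nat_eq_iff)
  thus ?thesis
    using assms by (simp add: omega_power_eq_iff flip: power_add)
qed

lemma block_of_mem:
  assumes P: "is_partition n h V" and m: "m < n"
  shows "block_of h V m \<in> {1..h}" and "m \<in> V (block_of h V m)"
proof -
  have "m \<in> (\<Union>i\<in>{1..h}. V i)"
    using P m unfolding is_partition_def by simp
  then obtain i where i: "i \<in> {1..h}" "m \<in> V i"
    by blast
  have disjoint: "\<And>i j. i \<in> {1..h} \<Longrightarrow> j \<in> {1..h} \<Longrightarrow> i \<noteq> j \<Longrightarrow> V i \<inter> V j = {}"
    using P unfolding is_partition_def by blast
  have "\<exists>!i. i \<in> {1..h} \<and> m \<in> V i"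
    using i disjoint by blast
  from theI'[OF this] show "block_of h V m \<in> {1..h}" "m \<in> V (block_of h V m)"
    unfolding block_of_def by auto
qed

lemma cyclic_successor_if_mod_eq:
  assumes "p \<in> {1..h}" and "q \<in> {1..h}" and "q mod h = Suc p mod h"
  shows "q = (if p = h then 1 else p + 1)"
proof -
  have mod_inj: "a = b" if "a \<in> {1..h}" "b \<in> {1..h}" "a mod h = b mod h" for a b :: nat
    using that by (cases "a = h"; cases "b = h") auto
  have "(if p = h then 1 else p + 1) mod h = Suc p mod h"
    using assms(1) by (simp add: mod_Suc)
  thus ?thesis
    using assms mod_inj[of q "if p = h then 1 else p + 1"] by auto
qed

definition block_phase :: "nat \<Rightarrow> nat \<Rightarrow> (nat \<Rightarrow> nat set) \<Rightarrow> complex mat" where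
  "block_phase n h V = mat_diag n (\<lambda>m. omega h ^ block_of h V m)"

lemma h_cyclic_if_block_phase_commutes:
  assumes A: "A \<in> carrier_mat n n" and P: "is_partition n h V"
    and comm: "A * block_phase n h V = omega h \<cdot>\<^sub>m (block_phase n h V * A)"
  shows "h_cyclic A h V"
  unfolding h_cyclic_def
proof (intro allI impI)
  fix i j assume "i < dim_row A" "j < dim_col A" and nz: "A $$ (i, j) \<noteq> 0"
  hence i: "i < n" and j: "j < n" using A by auto
  let ?b = "block_of h V"
  have "A $$ (i, j) * omega h ^ ?b j = omega h * (omega h ^ ?b i * A $$ (i, j))"
    using arg_cong[OF comm, of "\<lambda>M. M $$ (i, j)"] A i j
    by (simp add: block_phase_def mat_diag_mult_left mat_diag_mult_right)
  hence "omega h ^ ?b j = omega h ^ Suc (?b i)"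
    using nz by simp
  moreover have "h \<ge> 1" using P unfolding is_partition_def by simp
  ultimately have "?b j mod h = Suc (?b i) mod h"
    using omega_power_eq_iff by blast
  hence "?b j = (if ?b i = h then 1 else ?b i + 1)"
    using cyclic_successor_if_mod_eq block_of_mem[OF P i] block_of_mem[OF P j] by blast
  thus "\<exists>l\<in>{1..h}. i \<in> V l \<and> j \<in> V (if l = h then 1 else l + 1)"
    using block_of_mem[OF P i] block_of_mem[OF P j] by metis
qed

lemma mat_diag_mult_vec:
  assumes "v \<in> carrier_vec n"
  shows "mat_diag n f *\<^sub>v v = vec n (\<lambda>i. f i * v $ i)"
proof (rule eq_vecI, insert assms, auto simp: mat_diag_def scalar_prod_def, goal_cases)
  case (1 i)
  thus ?case by (subst sum.remove[of _ i], auto)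
qed

lemma block_phase_mult_vec:
  assumes "h \<ge> 1" and "x j \<in> carrier_vec n"
  shows "block_phase n h V *\<^sub>v x j = omega h ^ j \<cdot>\<^sub>v right_shift n h V 1 x j"
  using assms omega_power_alpha[OF assms(1)]
  by (intro eq_vecI) (auto simp: block_phase_def mat_diag_mult_vec right_shift_def ac_simps)

lemma right_jordan_chain_last:
  assumes "right_jordan_chain A lam x p"
  shows "A *\<^sub>v x p = lam \<cdot>\<^sub>v x p + (if p = 1 then 0\<^sub>v (dim_row A) else x (p - 1))"
  using assms unfolding right_jordan_chain_def by (cases "p = 1") auto

lemma eigenvalue_if_right_jordan_chain:
  assumes "right_jordan_chain A lam x p" shows "eigenvalue A lam"
  using assms unfolding right_jordan_chain_def eigenvalue_def eigenvector_def by auto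

lemma block_phase_intertwines_at_chain_end:
  assumes A: "A \<in> carrier_mat n n" and h: "h \<ge> 1"
    and x: "right_jordan_chain A lam x p"
    and z: "right_jordan_chain A (lam * omega h) (right_shift n h V 1 x) p"
  shows "A *\<^sub>v (block_phase n h V *\<^sub>v x p) = omega h \<cdot>\<^sub>v (block_phase n h V *\<^sub>v (A *\<^sub>v x p))"
proof -
  define D where "D = block_phase n h V"
  define \<omega> where "\<omega> = omega h"
  define z where "z = right_shift n h V 1 x"
  define x' where "x' = (if p = 1 then 0\<^sub>v n else x (p - 1))"
  define z' where "z' = (if p = 1 then 0\<^sub>v n else z (p - 1))"
  have p: "p \<ge> 1" and xc: "\<And>j. j \<in> {1..p} \<Longrightarrow> x j \<in> carrier_vec n"
    using x A unfolding right_jordan_chain_def by auto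
  have zc: "z j \<in> carrier_vec n" for j
    unfolding z_def right_shift_def by simp
  have D: "D \<in> carrier_mat n n"
    unfolding D_def block_phase_def by simp
  have Dx: "D *\<^sub>v x j = \<omega> ^ j \<cdot>\<^sub>v z j" if "j \<in> {1..p}" for j
    unfolding D_def \<omega>_def z_def by (rule block_phase_mult_vec[OF h, of x j, OF xc[OF that]])
  have x'c: "x' \<in> carrier_vec n" and z'c: "z' \<in> carrier_vec n"
    using xc[of "p - 1"] zc p unfolding x'_def z'_def by auto
  have Dx': "D *\<^sub>v x' = \<omega> ^ (p - 1) \<cdot>\<^sub>v z'"
    using Dx[of "p - 1"] D p unfolding x'_def z'_def by auto
  have "A *\<^sub>v (D *\<^sub>v x p) = \<omega> ^ p \<cdot>\<^sub>v (A *\<^sub>v z p)"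
    using Dx[of p] p A zc by (simp add: mult_mat_vec)
  also have "\<dots> = \<omega> ^ p \<cdot>\<^sub>v ((lam * \<omega>) \<cdot>\<^sub>v z p + z')"
    using right_jordan_chain_last[OF z] A unfolding z_def z'_def \<omega>_def by simp
  also have "\<dots> = \<omega> \<cdot>\<^sub>v (lam \<cdot>\<^sub>v (\<omega> ^ p \<cdot>\<^sub>v z p) + \<omega> ^ (p - 1) \<cdot>\<^sub>v z')"
  proof -
    have "\<omega> ^ p = \<omega> * \<omega> ^ (p - 1)"
      using p by (simp add: power_eq_if)
    thus ?thesis
      using zc[of p] z'c by (intro eq_vecI) (simp_all add: algebra_simps)
  qed
  also have "\<dots> = \<omega> \<cdot>\<^sub>v (D *\<^sub>v (lam \<cdot>\<^sub>v x p + x'))"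
    using Dx[of p] Dx' xc[of p] x'c D p by (simp add: mult_add_distrib_mat_vec mult_mat_vec)
  also have "\<dots> = \<omega> \<cdot>\<^sub>v (D *\<^sub>v (A *\<^sub>v x p))"
    using right_jordan_chain_last[OF x] A unfolding x'_def by simp
  finally show ?thesis
    unfolding D_def \<omega>_def .
qed

lemma right_jordan_chain_consecutive:
  assumes "s \<le> t" and "c s \<noteq> 0\<^sub>v (dim_row A)"
    and "\<And>u. u \<in> {s..t} \<Longrightarrow> c u \<in> carrier_vec (dim_row A)"
    and "\<And>u. u \<in> {s..t} \<Longrightarrow> A *\<^sub>v c u = lam \<cdot>\<^sub>v c u + (if s < u then c (u - 1) else 0\<^sub>v (dim_row A))"
  shows "right_jordan_chain A lam (\<lambda>j. c (s + j - 1)) (Suc (t - s))"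
  unfolding right_jordan_chain_def
proof (intro conjI ballI)
  show "A *\<^sub>v c (s + 1 - 1) = lam \<cdot>\<^sub>v c (s + 1 - 1)"
    using assms(1) assms(3,4)[of s] by simp
  fix j assume j: "j \<in> {2..Suc (t - s)}"
  hence "s < s + j - 1" and "s + j - 1 - 1 = s + (j - 1) - 1" and "s + j - 1 \<in> {s..t}"
    by auto
  thus "A *\<^sub>v c (s + j - 1) = lam \<cdot>\<^sub>v c (s + j - 1) + c (s + (j - 1) - 1)"
    using assms(4)[of "s + j - 1"] by simp
next
  fix j assume "j \<in> {1..Suc (t - s)}"
  hence "s + j - 1 \<in> {s..t}"
    using assms(1) by auto
  thus "c (s + j - 1) \<in> carrier_vec (dim_row A)"
    using assms(3) by blast
qed (use assms in auto)

lemma jordan_matrix_block_entries: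
  "t < sum_list (map fst n_as) \<Longrightarrow> \<exists>s a. s \<le> t \<and> (\<forall>u. s \<le> u \<and> u \<le> t \<longrightarrow>
     (\<forall>i < sum_list (map fst n_as). jordan_matrix n_as $$ (i,u) =
        (if i = u then a else if Suc i = u \<and> s < u then 1 else 0)))"
proof (induct n_as arbitrary: t)
  case Nil
  then show ?case by simp
next
  case (Cons na n_as)
  obtain m a where na: "na = (m,a)" by force
  let ?N = "sum_list (map fst n_as)"
  let ?B = "jordan_matrix n_as"
  show ?case
  proof (cases "t < m")
    case True
    show ?thesis
      by (rule exI[of _ 0], rule exI[of _ a], insert True Cons(2), auto simp: na jordan_matrix_Cons)
  next
    case False
    with Cons(2) have "t - m < ?N" by (auto simp: na)
    from Cons(1)[OF this] obtain s b where s: "s \<le> t - m" and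
      H: "\<And>u i. s \<le> u \<Longrightarrow> u \<le> t - m \<Longrightarrow> i < ?N \<Longrightarrow> ?B $$ (i,u) =
        (if i = u then b else if Suc i = u \<and> s < u then 1 else 0)" by blast
    show ?thesis
    proof (rule exI[of _ "s + m"], rule exI[of _ b], intro conjI allI impI)
      show "s + m \<le> t" using s False by auto
      fix u i assume u: "s + m \<le> u \<and> u \<le> t" and i: "i < sum_list (map fst (na # n_as))"
      show "jordan_matrix (na # n_as) $$ (i, u) = (if i = u then b else if Suc i = u \<and> s + m < u then 1 else 0)"
      proof (cases "i < m")
        case True thus ?thesis using u i Cons(2) by (auto simp: na jordan_matrix_Cons)
      next
        case False
        have "jordan_matrix (na # n_as) $$ (i, u) = ?B $$ (i - m, u - m)"
          using False u i Cons(2) by (auto simp: na jordan_matrix_Cons)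
        also have "\<dots> = (if i - m = u - m then b else if Suc (i - m) = u - m \<and> s < u - m then 1 else 0)"
          using H[of "u - m" "i - m"] u i False by (auto simp: na)
        finally show ?thesis using False u by auto
      qed
    qed
  qed
qed

lemma col_nonzero_if_left_invertible:
  fixes P Q :: "'a :: semiring_1 mat"
  assumes P: "P \<in> carrier_mat n n" and Q: "Q \<in> carrier_mat n n" and QP: "Q * P = 1\<^sub>m n"
    and t: "t < n"
  shows "col P t \<noteq> 0\<^sub>v n"
proof
  assume "col P t = 0\<^sub>v n"
  have "col (Q * P) t = Q *\<^sub>v col P t"
    by (rule col_mult2[OF Q P t])
  also have "\<dots> = 0\<^sub>v n"
    using Q \<open>col P t = 0\<^sub>v n\<close> by (intro eq_vecI) auto
  finally have "col (Q * P) t = 0\<^sub>v n" .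
  thus False
    using QP t by simp
qed

lemma jordan_basis_col_is_chain_end:
  assumes A: "A \<in> carrier_mat n n" and wit: "similar_mat_wit A (jordan_matrix n_as) P Q"
    and t: "t < n"
  shows "\<exists>lam x p. right_jordan_chain A lam x p \<and> x p = col P t"
proof -
  define J where "J = jordan_matrix n_as"
  have J: "J \<in> carrier_mat n n" and P: "P \<in> carrier_mat n n" and Q: "Q \<in> carrier_mat n n"
    and QP: "Q * P = 1\<^sub>m n" and AJ: "A = P * J * Q"
    using wit A unfolding similar_mat_wit_def J_def Let_def by auto
  have "A * P = P * J * (Q * P)"
    unfolding AJ using P Q J by (intro assoc_mult_mat[of "P * J" n n Q n P n]) auto
  hence AP: "A * P = P * J"
    using P J by (simp add: QP)
  have N: "sum_list (map fst n_as) = n"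
    using J unfolding J_def by auto
  have colP: "col P u \<in> carrier_vec n" for u
    using P by (simp add: carrier_vecI)
  from jordan_matrix_block_entries[of t n_as] t N obtain s a where st: "s \<le> t" and
    ent: "\<And>u i. s \<le> u \<Longrightarrow> u \<le> t \<Longrightarrow> i < n \<Longrightarrow>
      J $$ (i, u) = (if i = u then a else if Suc i = u \<and> s < u then 1 else 0)"
    unfolding J_def by auto
  have "A *\<^sub>v col P u = a \<cdot>\<^sub>v col P u + (if s < u then col P (u - 1) else 0\<^sub>v n)"
    if u: "u \<in> {s..t}" for u
  proof -
    have un: "u < n"
      using u t by auto
    have "A *\<^sub>v col P u = col (P * J) u"
      unfolding AP[symmetric] by (rule col_mult2[OF A P un, symmetric])
    also have "\<dots> = P *\<^sub>v col J u"
      by (rule col_mult2[OF P J un])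
    also have "col J u = a \<cdot>\<^sub>v unit_vec n u + (if s < u then unit_vec n (u - 1) else 0\<^sub>v n)"
      using J u t ent by (intro eq_vecI) auto
    also have "P *\<^sub>v \<dots> = a \<cdot>\<^sub>v col P u + (if s < u then col P (u - 1) else 0\<^sub>v n)"
      using u t P by (auto simp: mult_add_distrib_mat_vec[OF P] mult_mat_vec[OF P])
    finally show ?thesis .
  qed
  moreover have "col P s \<noteq> 0\<^sub>v n"
    using st t by (intro col_nonzero_if_left_invertible[OF P Q QP]) simp
  ultimately have "right_jordan_chain A a (\<lambda>j. col P (s + j - 1)) (Suc (t - s))"
    using A st colP by (intro right_jordan_chain_consecutive) auto
  thus ?thesis
    using st by fastforce
qed

lemma smult_mat_mult_vec:
  assumes "M \<in> carrier_mat nr nc" and "v \<in> carrier_vec nc"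
  shows "(k \<cdot>\<^sub>m M) *\<^sub>v v = k \<cdot>\<^sub>v (M *\<^sub>v v)"
  using assms by (intro eq_vecI) (auto simp: smult_scalar_prod_distrib[of _ nc])

lemma mat_eq_if_mult_cols_eq:
  fixes B C P Q :: "'a :: semiring_1 mat"
  assumes B: "B \<in> carrier_mat n n" and C: "C \<in> carrier_mat n n"
    and P: "P \<in> carrier_mat n n" and Q: "Q \<in> carrier_mat n n" and PQ: "P * Q = 1\<^sub>m n"
    and cols: "\<And>t. t < n \<Longrightarrow> B *\<^sub>v col P t = C *\<^sub>v col P t"
  shows "B = C"
proof -
  have BP: "B * P = C * P"
  proof (rule mat_col_eqI)
    fix t assume "t < dim_col (C * P)"
    hence "t < n"
      using P by simp
    thus "col (B * P) t = col (C * P) t"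
      using col_mult2[OF B P] col_mult2[OF C P] cols by simp
  qed (use B C P in auto)
  have "B = B * (P * Q)"
    using right_mult_one_mat[OF B] by (simp add: PQ)
  also have "\<dots> = C * P * Q"
    unfolding BP[symmetric] by (rule assoc_mult_mat[symmetric, OF B P Q])
  also have "\<dots> = C * (P * Q)"
    by (rule assoc_mult_mat[OF C P Q])
  also have "\<dots> = C"
    using right_mult_one_mat[OF C] by (simp add: PQ)
  finally show ?thesis .
qed

lemma jordan_basis_exists:
  fixes A :: "complex mat"
  assumes A: "A \<in> carrier_mat n n"
  obtains S T where "S \<in> carrier_mat n n" and "T \<in> carrier_mat n n" and "S * T = 1\<^sub>m n"
    and "\<And>t. t < n \<Longrightarrow> \<exists>lam x p. right_jordan_chain A lam x p \<and> x p = col S t"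
proof -
  obtain as where "char_poly A = (\<Prod>a\<leftarrow>as. [:- a, 1:])"
    using char_poly_factorized[OF A] by blast
  then obtain n_as where "jordan_nf A n_as"
    using jordan_nf_exists[OF A] by blast
  then obtain S T where wit: "similar_mat_wit A (jordan_matrix n_as) S T"
    unfolding jordan_nf_def similar_mat_def by blast
  moreover have "S \<in> carrier_mat n n" and "T \<in> carrier_mat n n" and "S * T = 1\<^sub>m n"
    using wit A unfolding similar_mat_wit_def Let_def by auto
  ultimately show ?thesis
    using that jordan_basis_col_is_chain_end[OF A] by blast
qed

lemma block_phase_commutes_if_shifted_chains:
  assumes A: "A \<in> carrier_mat n n" and h: "h \<ge> 1"
    and shift: "\<And>lam x p. right_jordan_chain A lam x p \<Longrightarrow>
      right_jordan_chain A (lam * omega h) (right_shift n h V 1 x) p"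
  shows "A * block_phase n h V = omega h \<cdot>\<^sub>m (block_phase n h V * A)"
proof -
  let ?D = "block_phase n h V"
  have D: "?D \<in> carrier_mat n n"
    unfolding block_phase_def by simp
  obtain S T where S: "S \<in> carrier_mat n n" and T: "T \<in> carrier_mat n n" and ST: "S * T = 1\<^sub>m n"
    and chains: "\<And>t. t < n \<Longrightarrow> \<exists>lam x p. right_jordan_chain A lam x p \<and> x p = col S t"
    using jordan_basis_exists[OF A] by blast
  show ?thesis
  proof (rule mat_eq_if_mult_cols_eq[OF _ _ S T ST])
    fix t assume "t < n"
    then obtain lam x p where x: "right_jordan_chain A lam x p" and xp: "x p = col S t"
      using chains by blast
    have St: "col S t \<in> carrier_vec n"
      using S by (simp add: carrier_vecI)
    have "(A * ?D) *\<^sub>v col S t = A *\<^sub>v (?D *\<^sub>v x p)"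
      using A D St by (simp add: xp)
    also have "\<dots> = omega h \<cdot>\<^sub>v (?D *\<^sub>v (A *\<^sub>v x p))"
      by (rule block_phase_intertwines_at_chain_end[OF A h x shift[OF x]])
    also have "\<dots> = (omega h \<cdot>\<^sub>m (?D * A)) *\<^sub>v col S t"
      using A D St by (simp add: xp smult_mat_mult_vec[of _ n n])
    finally show "(A * ?D) *\<^sub>v col S t = (omega h \<cdot>\<^sub>m (?D * A)) *\<^sub>v col S t" .
  qed (use A D in auto)
qed

theorem theorem4p5:
  fixes A :: "complex mat" and n h :: nat and V :: "nat \<Rightarrow> nat set"
  assumes A: "A \<in> carrier_mat n n"
    and P: "is_partition n h V"
    and right: "\<And>lam x p k. eigenvalue A lam \<Longrightarrow> right_jordan_chain A lam x p \<Longrightarrow> k < h \<Longrightarrow>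
        right_jordan_chain A (lam * omega h ^ k) (right_shift n h V k x) p"
    and left: "\<And>lam y p k. eigenvalue A lam \<Longrightarrow> left_jordan_chain A lam y p \<Longrightarrow> k < h \<Longrightarrow>
        left_jordan_chain A (lam * omega h ^ k) (left_shift n h V k y) p"
  shows "h_cyclic A h V"
proof -
  have h: "h \<ge> 1"
    using P unfolding is_partition_def by simp
  have \<omega>: "omega h ^ (1 mod h) = omega h"
    using omega_power_mod[OF h, of 1] by simp
  have "right_jordan_chain A (lam * omega h) (right_shift n h V 1 x) p"
    if x: "right_jordan_chain A lam x p" for lam x p
  proof -
    \<comment> \<open>\<open>k = 1 mod h\<close> rather than \<open>k = 1\<close>, so that \<open>h = 1\<close> is covered as well\<close>
    have "1 mod h < h"
      using h by simp
    from right[OF eigenvalue_if_right_jordan_chain[OF x] x this]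
    show ?thesis
      unfolding right_shift_def \<omega> by simp
  qed
  hence "A * block_phase n h V = omega h \<cdot>\<^sub>m (block_phase n h V * A)"
    by (rule block_phase_commutes_if_shifted_chains[OF A h])
  thus ?thesis
    by (rule h_cyclic_if_block_phase_commutes[OF A P])
qed

end
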